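(* Let $\rho_0=\sum_{n=1}^Np_n|n\rangle\langle n|$ be a density matrix on $\mathbb{C}^N$ ($N\ge2$) with eigenvalues in decreasing order $p_1\ge p_2\ge\dots\ge p_N$, and let $\gamma>0$. For Hermitian $G$ put $$QFI(\rho_0,G)=2\sum_{i\neq j}\frac{(p_i-p_j)^2}{p_i+p_j}|G_{ij}|^2,\qquad G_{ij}=\langle i|G|j\rangle,$$ where terms with $p_i+p_j=0$ are omitted. Then $$\max_{G=G^\dagger,\ \mathrm{Tr}[G^2]\le2\gamma^2}QFI(\rho_0,G)=4\gamma^2\frac{(p_1-p_N)^2}{p_1+p_N}.$$ The maximum is attained by a Hermitian $G$ with $|G_{1N}|=|G_{N1}|=\gamma$ and all other matrix elements (including diagonal ones) equal to $0$.
   Context: The expression $QFI(\rho_0,G)$ is the quantum Fisher information of the unitary family $\rho_\lambda=e^{-i\lambda G}\rho_0e^{i\lambda G}$ at $\lambda=0$. *)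

theory Defs
  imports Complex_Main "Jordan_Normal_Form.Matrix"
begin

text \<open>Eigenvalues p 0 >= ... >= p (N-1) (0-based indices) of the diagonal density matrix
  rho0 = sum_n p n |n><n| on C^N. Hermitian N x N matrices G are JNF matrices.\<close>

definition hermitian_mat :: "nat \<Rightarrow> complex mat \<Rightarrow> bool" where
  "hermitian_mat N G \<longleftrightarrow> G \<in> carrier_mat N N \<and>
     (\<forall>i<N. \<forall>j<N. G $$ (i,j) = cnj (G $$ (j,i)))"

definition mat_trace :: "complex mat \<Rightarrow> complex" where
  "mat_trace A = (\<Sum>i<dim_row A. A $$ (i,i))"

definition QFI :: "nat \<Rightarrow> (nat \<Rightarrow> real) \<Rightarrow> complex mat \<Rightarrow> real" where
  "QFI N p G = 2 * (\<Sum>i<N. \<Sum>j<N.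
      if i \<noteq> j \<and> p i + p j \<noteq> 0
      then (p i - p j)^2 / (p i + p j) * (cmod (G $$ (i,j)))^2 else 0)"

end

theory Submission
  imports Defs
begin

text \<open>Every weight (p i - p j)^2/(p i + p j) in QFI is at most the one of the extreme pair
  (p 0, p (N-1)), and the weights multiply |G_ij|^2, whose total is Tr[G^2] for Hermitian G.
  Hence QFI \<le> 2 w Tr[G^2] \<le> 4 \<gamma>^2 w with w the extreme weight, and a Hermitian G supported
  on the two entries (0, N-1), (N-1, 0) puts all of its mass there and attains the bound.\<close>

lemma sum_sum_supported_on_pair:
  fixes h :: "nat \<Rightarrow> nat \<Rightarrow> 'a::comm_monoid_add"
  assumes "a \<noteq> b" "a < N" "b < N"
    and "\<forall>i<N. \<forall>j<N. (i,j) \<noteq> (a,b) \<and> (i,j) \<noteq> (b,a) \<longrightarrow> h i j = 0"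
  shows "(\<Sum>i<N. \<Sum>j<N. h i j) = h a b + h b a"
proof -
  have "(\<Sum>i<N. \<Sum>j<N. h i j) = (\<Sum>(i,j)\<in>{..<N} \<times> {..<N}. h i j)"
    by (simp add: sum.cartesian_product)
  also have "\<dots> = (\<Sum>(i,j)\<in>{(a,b),(b,a)}. h i j)"
    using assms by (intro sum.mono_neutral_right) auto
  finally show ?thesis using assms(1) by simp
qed

lemma hermitian_trace_square:
  assumes "hermitian_mat N G"
  shows "Re (mat_trace (G * G)) = (\<Sum>i<N. \<Sum>j<N. (cmod (G $$ (i,j)))^2)"
proof -
  have G: "G \<in> carrier_mat N N" using assms by (simp add: hermitian_mat_def)
  have "mat_trace (G * G) = (\<Sum>i<N. \<Sum>j<N. G $$ (i,j) * G $$ (j,i))"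
    using G by (simp add: mat_trace_def scalar_prod_def row_def col_def lessThan_atLeast0)
  also have "\<dots> = (\<Sum>i<N. \<Sum>j<N. complex_of_real ((cmod (G $$ (i,j)))^2))"
  proof (intro sum.cong refl)
    fix i j assume "i \<in> {..<N}" "j \<in> {..<N}"
    then have "G $$ (j,i) = cnj (G $$ (i,j))" using assms unfolding hermitian_mat_def by blast
    then show "G $$ (i,j) * G $$ (j,i) = complex_of_real ((cmod (G $$ (i,j)))^2)"
      by (metis complex_norm_square)
  qed
  finally show ?thesis by simp
qed

lemma power2_diff_div_sum_le_outer:
  fixes a b A B :: real
  assumes "0 \<le> B" "B \<le> b" "b \<le> a" "a \<le> A" "0 < a + b"
  shows "(a - b)^2 / (a + b) \<le> (A - B)^2 / (A + B)"
proof -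
  define d s D S where "d = a - b" "s = a + b" "D = A - B" "S = A + B"
  have "0 \<le> d" "d \<le> D" "d \<le> s" "0 < s" "0 < S" "S \<le> s + (D - d)"
    using assms by (auto simp: d_s_D_S_def)
  text \<open>Bounding S by s + (D - d) turns the claim d^2 S \<le> D^2 s into a product of nonnegatives.\<close>
  then have "d^2 * S \<le> d^2 * (s + (D - d))" by (intro mult_left_mono) auto
  also have "\<dots> = D^2 * s - (D - d) * (s * (D + d) - d^2)"
    by (simp add: algebra_simps power2_eq_square)
  also have "\<dots> \<le> D^2 * s"
  proof -
    have "d * d \<le> s * (D + d)"
      using \<open>0 \<le> d\<close> \<open>d \<le> D\<close> \<open>d \<le> s\<close> by (intro mult_mono) auto
    then show ?thesis using \<open>d \<le> D\<close> by (simp add: power2_eq_square)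
  qed
  finally show ?thesis using \<open>0 < s\<close> \<open>0 < S\<close> by (simp add: d_s_D_S_def divide_simps)
qed

lemma pair_weight_le_extreme:
  fixes p :: "nat \<Rightarrow> real"
  assumes nonneg: "\<And>n. n < N \<Longrightarrow> p n \<ge> 0"
    and decreasing: "\<And>i j. i \<le> j \<Longrightarrow> j < N \<Longrightarrow> p j \<le> p i"
    and "i < N" "j < N" "p i + p j \<noteq> 0"
  shows "(p i - p j)^2 / (p i + p j) \<le> (p 0 - p (N-1))^2 / (p 0 + p (N-1))"
proof -
  have ordered: "(p k - p l)^2 / (p k + p l) \<le> (p 0 - p (N-1))^2 / (p 0 + p (N-1))"
    if "k < N" "l < N" "p l \<le> p k" "p k + p l \<noteq> 0" for k l
  proof (rule power2_diff_div_sum_le_outer)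
    show "p (N-1) \<le> p l" "p k \<le> p 0" using decreasing that by auto
    show "0 < p k + p l" using nonneg that by (metis add_nonneg_nonneg order_le_neq_trans)
  qed (use nonneg that in auto)
  show ?thesis
  proof (cases "p j \<le> p i")
    case True
    then show ?thesis using ordered assms by blast
  next
    case False
    then show ?thesis using ordered[of j i] assms by (simp add: power2_commute add.commute)
  qed
qed

lemma QFI_le_weight_trace:
  assumes "hermitian_mat N G" "0 \<le> w"
    and weight_le: "\<And>i j. i < N \<Longrightarrow> j < N \<Longrightarrow> i \<noteq> j \<Longrightarrow> p i + p j \<noteq> 0 \<Longrightarrow>
      (p i - p j)^2 / (p i + p j) \<le> w"
  shows "QFI N p G \<le> 2 * w * Re (mat_trace (G * G))"
proof -
  have "QFI N p G \<le> 2 * (\<Sum>i<N. \<Sum>j<N. w * (cmod (G $$ (i,j)))^2)"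
    unfolding QFI_def
  proof (intro mult_left_mono sum_mono)
    fix i j assume "i \<in> {..<N}" "j \<in> {..<N}"
    then show "(if i \<noteq> j \<and> p i + p j \<noteq> 0
        then (p i - p j)^2 / (p i + p j) * (cmod (G $$ (i,j)))^2 else 0)
      \<le> w * (cmod (G $$ (i,j)))^2"
      using weight_le[of i j] \<open>0 \<le> w\<close>
      by (simp del: times_divide_eq_left add: mult_right_mono)
  qed simp
  also have "\<dots> = 2 * w * Re (mat_trace (G * G))"
    by (simp add: hermitian_trace_square[OF assms(1)] sum_distrib_left mult.assoc)
  finally show ?thesis .
qed

lemma hermitian_trace_square_supported_on_pair:
  assumes "hermitian_mat N G" "a \<noteq> b" "a < N" "b < N"
    and "\<forall>i<N. \<forall>j<N. (i,j) \<noteq> (a,b) \<and> (i,j) \<noteq> (b,a) \<longrightarrow> G $$ (i,j) = 0"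
  shows "Re (mat_trace (G * G)) = (cmod (G $$ (a,b)))^2 + (cmod (G $$ (b,a)))^2"
  unfolding hermitian_trace_square[OF assms(1)] using assms
  by (intro sum_sum_supported_on_pair) auto

lemma QFI_supported_on_pair:
  assumes "a \<noteq> b" "a < N" "b < N" "p a + p b \<noteq> 0"
    and "\<forall>i<N. \<forall>j<N. (i,j) \<noteq> (a,b) \<and> (i,j) \<noteq> (b,a) \<longrightarrow> G $$ (i,j) = 0"
  shows "QFI N p G =
    2 * (p a - p b)^2 / (p a + p b) * ((cmod (G $$ (a,b)))^2 + (cmod (G $$ (b,a)))^2)"
proof -
  have "QFI N p G = 2 * ((p a - p b)^2 / (p a + p b) * (cmod (G $$ (a,b)))^2
      + (p b - p a)^2 / (p b + p a) * (cmod (G $$ (b,a)))^2)"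
    unfolding QFI_def using assms
    by (subst sum_sum_supported_on_pair[of a b]) (simp_all add: add.commute)
  then show ?thesis by (simp add: power2_commute add.commute distrib_left)
qed

lemma largest_weight_pos:
  fixes p :: "nat \<Rightarrow> real"
  assumes "(\<Sum>n<N. p n) = 1" "\<And>n. n < N \<Longrightarrow> p n \<le> p 0"
  shows "p 0 > 0"
proof -
  have "1 \<le> real N * p 0"
    using assms sum_mono[of "{..<N}" p "\<lambda>_. p 0"] by simp
  then show ?thesis by (smt (verit) mult_nonneg_nonpos of_nat_0_le_iff)
qed

theorem mainTheorem6:
  fixes N :: nat and p :: "nat \<Rightarrow> real" and \<gamma> :: real
  assumes "N \<ge> 2"
    and "\<And>n. n < N \<Longrightarrow> p n \<ge> 0"
    and "(\<Sum>n<N. p n) = 1"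
    and "\<And>i j. i \<le> j \<Longrightarrow> j < N \<Longrightarrow> p j \<le> p i"
    and "\<gamma> > 0"
  shows "(4 * \<gamma>^2 * (p 0 - p (N-1))^2 / (p 0 + p (N-1)))
             \<in> {QFI N p G | G. hermitian_mat N G \<and> Re (mat_trace (G * G)) \<le> 2 * \<gamma>^2}
         \<and> (\<forall>G. hermitian_mat N G \<and> Re (mat_trace (G * G)) \<le> 2 * \<gamma>^2 \<longrightarrow>
               QFI N p G \<le> 4 * \<gamma>^2 * (p 0 - p (N-1))^2 / (p 0 + p (N-1)))
         \<and> (\<forall>G. hermitian_mat N G \<and> cmod (G $$ (0, N-1)) = \<gamma> \<and> cmod (G $$ (N-1, 0)) = \<gamma>
           \<and> (\<forall>i<N. \<forall>j<N. (i,j) \<noteq> (0,N-1) \<and> (i,j) \<noteq> (N-1,0) \<longrightarrow> G $$ (i,j) = 0)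
           \<longrightarrow> Re (mat_trace (G * G)) \<le> 2 * \<gamma>^2
               \<and> QFI N p G = 4 * \<gamma>^2 * (p 0 - p (N-1))^2 / (p 0 + p (N-1)))
         \<and> (\<exists>G. hermitian_mat N G \<and> cmod (G $$ (0, N-1)) = \<gamma> \<and> cmod (G $$ (N-1, 0)) = \<gamma>
           \<and> (\<forall>i<N. \<forall>j<N. (i,j) \<noteq> (0,N-1) \<and> (i,j) \<noteq> (N-1,0) \<longrightarrow> G $$ (i,j) = 0))"
proof -
  define m where "m = N - 1"
  define w where "w = (p 0 - p m)^2 / (p 0 + p m)"
  have m: "0 \<noteq> m" "0 < N" "m < N" using assms(1) by (auto simp: m_def)
  have "p 0 > 0" using largest_weight_pos[OF assms(3)] assms(4) by simp
  then have extreme_pos: "p 0 + p m > 0" using assms(2) m by (simp add: add_pos_nonneg)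
  then have "0 \<le> w" by (simp add: w_def)
  have weight_le: "(p i - p j)^2 / (p i + p j) \<le> w"
    if "i < N" "j < N" "i \<noteq> j" "p i + p j \<noteq> 0" for i j
    using pair_weight_le_extreme[of N p i j] assms(2,4) that by (simp add: w_def m_def)
  have upper: "QFI N p G \<le> 4 * \<gamma>^2 * w"
    if "hermitian_mat N G" "Re (mat_trace (G * G)) \<le> 2 * \<gamma>^2" for G
  proof -
    have "QFI N p G \<le> 2 * w * Re (mat_trace (G * G))"
      using QFI_le_weight_trace[OF that(1) \<open>0 \<le> w\<close>] weight_le by blast
    also have "\<dots> \<le> 2 * w * (2 * \<gamma>^2)"
      using that(2) \<open>0 \<le> w\<close> by (intro mult_left_mono) auto
    finally show ?thesis by (simp add: mult_ac)
  qed
  have attained: "Re (mat_trace (G * G)) \<le> 2 * \<gamma>^2 \<and> QFI N p G = 4 * \<gamma>^2 * w"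
    if "hermitian_mat N G" "cmod (G $$ (0, m)) = \<gamma>" "cmod (G $$ (m, 0)) = \<gamma>"
      "\<forall>i<N. \<forall>j<N. (i,j) \<noteq> (0,m) \<and> (i,j) \<noteq> (m,0) \<longrightarrow> G $$ (i,j) = 0" for G
    using hermitian_trace_square_supported_on_pair[OF that(1) m that(4)]
      QFI_supported_on_pair[OF m _ that(4), of p] extreme_pos that(2,3)
    by (simp add: w_def)
  define G0 where "G0 = mat N N (\<lambda>(i,j).
    if (i,j) = (0,m) \<or> (i,j) = (m,0) then complex_of_real \<gamma> else 0)"
  have G0: "hermitian_mat N G0" "cmod (G0 $$ (0, m)) = \<gamma>" "cmod (G0 $$ (m, 0)) = \<gamma>"
      "\<forall>i<N. \<forall>j<N. (i,j) \<noteq> (0,m) \<and> (i,j) \<noteq> (m,0) \<longrightarrow> G0 $$ (i,j) = 0"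
    using m assms(5) by (auto simp: G0_def hermitian_mat_def)
  have "4 * \<gamma>^2 * w \<in> {QFI N p G | G. hermitian_mat N G \<and> Re (mat_trace (G * G)) \<le> 2 * \<gamma>^2}"
    using attained[OF G0] G0(1) by force
  then show ?thesis using upper attained G0 by (auto simp: w_def m_def)
qed

end
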